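(* Let $\mathrm{M}=\langle e_1+I,\ e_2+I,\ -I\rangle$, where $e_1,e_2$ are the standard basis vectors of $E^2$. The group $\mathrm{Aff}(\mathrm{M})$ has a normal dihedral subgroup $\mathrm{K}$ of order 4 generated by $(e_1/2+I)_\star$ and $(e_2/2+I)_\star$. The map $\eta:\mathrm{Aff}(\mathrm{M})\to\mathrm{PGL}(2,\mathbb Z)$ defined by $\eta((a+A)_\star)=\pm A$ for each $A\in\mathrm{GL}(2,\mathbb Z)$ is an epimorphism with kernel $\mathrm{K}$. The map $\sigma:\mathrm{PGL}(2,\mathbb Z)\to\mathrm{Aff}(\mathrm{M})$ defined by $\sigma(\pm A)=A_\star$ is a monomorphism, and $\sigma$ is a right inverse of $\eta$.
   Context: Affine maps of $E^2$ are written $a+A$ (meaning $x\mapsto a+Ax$); $a+I$ is translation by $a$. For a 2-space group $\mathrm{M}$, let $N_A(\mathrm{M})$ be its normalizer in the affine group of $E^2$. Each $a+A\in N_A(\mathrm{M})$ induces an affinity $(a+A)_\star:\mathrm{M}x\mapsto\mathrm{M}(a+Ax)$ of the flat orbifold $E^2/\mathrm{M}$; $\mathrm{Aff}(\mathrm{M})$ is the group of all such affinities (isomorphic to $N_A(\mathrm{M})/\mathrm{M}$). A dihedral group of order 4 means the Klein four-group. $\mathrm{PGL}(2,\mathbb Z)=\mathrm{GL}(2,\mathbb Z)/\{\pm I\}$, with the class of $A$ written $\pm A$. *)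

theory Defs
  imports "HOL-Analysis.Analysis" "HOL-Algebra.Algebra"
begin

text \<open>An affine map a+A of E^2 is represented by the pair (a, A); it acts by x \<mapsto> a + A x.\<close>
type_synonym aff = "(real^2) \<times> (real^2^2)"

definition aff_app :: "aff \<Rightarrow> real^2 \<Rightarrow> real^2" where
  "aff_app g x = fst g + snd g *v x"

definition AffE :: "aff monoid" where
  "AffE = \<lparr>carrier = {g. invertible (snd g)},
           mult = (\<lambda>g h. (fst g + snd g *v fst h, snd g ** snd h)),
           one = (0, mat 1)\<rparr>"

definition e1 :: "real^2" where "e1 = vector [1, 0]"
definition e2 :: "real^2" where "e2 = vector [0, 1]"

definition Mgrp :: "aff set" where
  "Mgrp = generate AffE {(e1, mat 1), (e2, mat 1), (0, - mat 1)}"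

definition NM :: "aff set" where
  "NM = normalizer AffE Mgrp"

definition orbM :: "real^2 \<Rightarrow> (real^2) set" where
  "orbM x = (\<lambda>g. aff_app g x) ` Mgrp"

definition OrbSp :: "(real^2) set set" where
  "OrbSp = range orbM"

definition star :: "aff \<Rightarrow> (real^2) set \<Rightarrow> (real^2) set" where
  "star g = (\<lambda>P\<in>OrbSp. orbM (aff_app g (SOME x. x \<in> P)))"

definition AffM :: "((real^2) set \<Rightarrow> (real^2) set) monoid" where
  "AffM = \<lparr>carrier = star ` NM,
           mult = (\<lambda>f h. (\<lambda>P\<in>OrbSp. f (h P))),
           one = (\<lambda>P\<in>OrbSp. P)\<rparr>"

definition Kgrp :: "((real^2) set \<Rightarrow> (real^2) set) set" where
  "Kgrp = generate AffM {star ((1/2) *\<^sub>R e1, mat 1), star ((1/2) *\<^sub>R e2, mat 1)}"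

definition GL2Z :: "(real^2^2) monoid" where
  "GL2Z = \<lparr>carrier = {A. (\<forall>i j. A $ i $ j \<in> \<int>) \<and> (det A = 1 \<or> det A = -1)},
           mult = (\<lambda>A B. A ** B),
           one = mat 1\<rparr>"

definition PGL2Z :: "((real^2^2) set) monoid" where
  "PGL2Z = GL2Z Mod {mat 1, - mat 1}"

definition pm :: "(real^2^2) \<Rightarrow> (real^2^2) set" where
  "pm A = {mat 1, - mat 1} #>\<^bsub>GL2Z\<^esub> A"

end

theory Submission
  imports Defs
begin

text \<open>The group M consists of the maps x \<mapsto> n \<plusminus> x with n \<in> \<int>^2, so two points lie in
  the same M-orbit iff their difference or their sum is integral. Conjugating the generators
  shows that the normalizer of M is {a + A | 2a \<in> \<int>^2, A \<in> GL(2,\<int>)}. Two of its elements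
  a + A and b + B induce the same affinity iff B = A and b - a \<in> \<int>^2, or B = -A and
  b + a \<in> \<int>^2: otherwise, for every x, one of two affine expressions in x that are not both
  constant would be integral, which fails on a line along which both are non-constant.
  Hence the affinity of a + A determines \<plusminus>A, which gives an epimorphism onto PGL(2,\<int>) with
  section \<plusminus>A \<mapsto> A; its kernel consists of the affinities of the translations by a with
  2a \<in> \<int>^2, i.e. of four half-lattice translations.\<close>

section \<open>Integral vectors and matrices\<close>

definition int_vec :: "real^'n \<Rightarrow> bool" where
  "int_vec v \<longleftrightarrow> (\<forall>i. v $ i \<in> \<int>)"

definition int_mat :: "real^'n^'m \<Rightarrow> bool" where
  "int_mat A \<longleftrightarrow> (\<forall>i j. A $ i $ j \<in> \<int>)"

lemma int_vec_0 [simp]: "int_vec 0"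
  by (simp add: int_vec_def)

lemma int_vec_add [intro]: "int_vec v \<Longrightarrow> int_vec w \<Longrightarrow> int_vec (v + w)"
  by (simp add: int_vec_def)

lemma int_vec_minus_iff [simp]: "int_vec (- v) \<longleftrightarrow> int_vec v"
  by (simp add: int_vec_def)

lemma int_mat_mult_vec [intro]: "int_mat A \<Longrightarrow> int_vec v \<Longrightarrow> int_vec (A *v v)"
  by (simp add: int_vec_def int_mat_def matrix_vector_mult_def Ints_sum Ints_mult)

lemma int_mat_mult [intro]: "int_mat A \<Longrightarrow> int_mat B \<Longrightarrow> int_mat (A ** B)"
  by (simp add: int_mat_def matrix_matrix_mult_def Ints_sum Ints_mult)

lemma int_mat_1 [simp]: "int_mat (mat 1)"
  by (simp add: int_mat_def mat_def)

lemma int_mat_det: "int_mat A \<Longrightarrow> det A \<in> \<int>"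
  by (simp add: int_mat_def det_def Ints_sum Ints_mult Ints_prod)

lemma int_mat_det_unit:
  assumes "int_mat A" "int_mat B" "A ** B = mat 1"
  shows "det A = 1 \<or> det A = -1"
proof -
  obtain m n :: int where "det A = of_int m" "det B = of_int n"
    using int_mat_det assms(1,2) by (metis Ints_cases)
  moreover have "det A * det B = 1"
    using assms(3) by (metis det_I det_mul)
  ultimately have "m * n = 1"
    by (metis of_int_eq_1_iff of_int_mult)
  then show ?thesis
    using \<open>det A = of_int m\<close> zmult_eq_1_iff by auto
qed

lemma int_mat_of_columns:
  "int_vec ((A::real^2^2) *v e1) \<Longrightarrow> int_vec (A *v e2) \<Longrightarrow> int_mat A"
  by (simp add: int_vec_def int_mat_def matrix_vector_mult_def sum_2 e1_def e2_def forall_2)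

lemma cayley_hamilton_mat2:
  "(A::real^2^2) ** (trace A *\<^sub>R mat 1 - A) = det A *\<^sub>R mat 1"
  by (simp add: vec_eq_iff forall_2 matrix_matrix_mult_def sum_2 trace_def det_2 mat_def
      algebra_simps)

lemma GL2Z_carrier_iff: "A \<in> carrier GL2Z \<longleftrightarrow> int_mat A \<and> (det A = 1 \<or> det A = -1)"
  by (simp add: GL2Z_def int_mat_def)

lemma GL2Z_left_inverse:
  assumes A: "A \<in> carrier GL2Z" and BA: "B ** A = mat 1"
  shows "B \<in> carrier GL2Z"
proof -
  define C where "C = det A *\<^sub>R (trace A *\<^sub>R mat 1 - A)"
  have "A ** C = det A *\<^sub>R (A ** (trace A *\<^sub>R mat 1 - A))"
    by (simp add: C_def matrix_scalar_ac scalar_matrix_assoc)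
  also have "\<dots> = (det A * det A) *\<^sub>R mat 1"
    by (simp add: cayley_hamilton_mat2)
  also have "det A * det A = 1"
    using A by (auto simp: GL2Z_carrier_iff)
  finally have "B = C"
    by (metis BA matrix_mul_assoc matrix_mul_lid matrix_mul_rid scaleR_one)
  moreover have "int_mat C"
    using A int_mat_det[of A]
    by (auto simp: C_def GL2Z_carrier_iff int_mat_def trace_def mat_def Ints_sum)
  ultimately have "int_mat B"
    by simp
  moreover have "det B = 1 \<or> det B = -1"
    using int_mat_det_unit[OF \<open>int_mat B\<close> _ BA] A by (simp add: GL2Z_carrier_iff)
  ultimately show ?thesis
    by (simp add: GL2Z_carrier_iff)
qed

lemma countable_int_vec_on_line:
  fixes v c :: "real^'n"
  assumes "v \<noteq> 0"
  shows "countable {t::real. int_vec (t *\<^sub>R v + c)}"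
proof -
  obtain i where vi: "v $ i \<noteq> 0"
    using assms by (auto simp: vec_eq_iff)
  have "{t. int_vec (t *\<^sub>R v + c)} \<subseteq> (\<lambda>k. (k - c $ i) / v $ i) ` \<int>"
  proof
    fix t assume "t \<in> {t. int_vec (t *\<^sub>R v + c)}"
    then have "t * v $ i + c $ i \<in> \<int>"
      by (simp add: int_vec_def)
    moreover have "t = ((t * v $ i + c $ i) - c $ i) / v $ i"
      using vi by simp
    ultimately show "t \<in> (\<lambda>k. (k - c $ i) / v $ i) ` \<int>"
      by blast
  qed
  then show ?thesis
    using countable_int countable_subset by blast
qed

lemma nonzero_matrix_witness: "(C::real^'n^'m) \<noteq> 0 \<Longrightarrow> \<exists>u. C *v u \<noteq> 0"
  by (metis matrix_eq matrix_vector_mult_0)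

lemma int_vec_affine_everywhere:
  fixes D :: "real^'n^'m"
  assumes D: "\<forall>x. int_vec (D *v x + d)"
  shows "D = 0 \<and> int_vec d"
proof
  show "D = 0"
  proof (rule ccontr)
    assume "D \<noteq> 0"
    then obtain u where u: "D *v u \<noteq> 0"
      using nonzero_matrix_witness by blast
    have "UNIV = {t. int_vec (t *\<^sub>R (D *v u) + d)}"
      using D by (auto simp flip: matrix_vector_mult_scaleR)
    then show False
      using countable_int_vec_on_line[OF u, of d] uncountable_UNIV_real by simp
  qed
  show "int_vec d"
    using D by (metis add_0 matrix_vector_mult_0_right)
qed

text \<open>On a line along which both affine maps are non-constant each of them hits the lattice only
  countably often, so together they cannot cover the line.\<close>

lemma int_vec_affine_cover:
  fixes C D :: "real^'n^'m"
  assumes cover: "\<forall>x. int_vec (C *v x + c) \<or> int_vec (D *v x + d)"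
  shows "(C = 0 \<and> int_vec c) \<or> (D = 0 \<and> int_vec d)"
proof -
  have kernels: "C *v u = 0 \<or> D *v u = 0" for u
  proof (rule ccontr)
    assume "\<not> (C *v u = 0 \<or> D *v u = 0)"
    then have "countable ({t. int_vec (t *\<^sub>R (C *v u) + c)} \<union> {t. int_vec (t *\<^sub>R (D *v u) + d)})"
      by (simp add: countable_int_vec_on_line)
    moreover have "{t. int_vec (t *\<^sub>R (C *v u) + c)} \<union> {t. int_vec (t *\<^sub>R (D *v u) + d)} = UNIV"
      using cover by (auto simp flip: matrix_vector_mult_scaleR)
    ultimately show False
      using uncountable_UNIV_real by simp
  qed
  have "C = 0 \<or> D = 0"
  proof (rule ccontr)
    assume "\<not> (C = 0 \<or> D = 0)"
    then obtain u w where u: "C *v u \<noteq> 0" and w: "D *v w \<noteq> 0"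
      using nonzero_matrix_witness by blast
    then have "C *v (u + w) \<noteq> 0" "D *v (u + w) \<noteq> 0"
      using kernels[of u] kernels[of w] by (simp_all add: matrix_vector_right_distrib)
    then show False
      using kernels by blast
  qed
  then show ?thesis
  proof
    assume "C = 0"
    then show ?thesis
      using cover int_vec_affine_everywhere[of D d] by (cases "int_vec c") auto
  next
    assume "D = 0"
    then show ?thesis
      using cover int_vec_affine_everywhere[of C c] by (cases "int_vec d") auto
  qed
qed

section \<open>The affine group and the group M\<close>

lemma matrix_mul_minus_left [simp]: "(- A) ** B = - (A ** B)"
  for A :: "real^'n^'m"
  by (simp add: matrix_matrix_mult_def vec_eq_iff sum_negf)

lemma matrix_mul_minus_right [simp]: "A ** (- B) = - (A ** B)"
  for A :: "real^'n^'m"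
  by (simp add: matrix_matrix_mult_def vec_eq_iff sum_negf)

lemma matrix_vector_mult_minus_left [simp]: "(- A) *v x = - (A *v x)"
  for A :: "real^'n^'m"
  by (simp add: matrix_vector_mult_def vec_eq_iff sum_negf)

lemma matrix_vector_mult_minus_right [simp]: "A *v (- x) = - (A *v x)"
  for A :: "real^'n^'m"
  by (simp add: matrix_vector_mult_def vec_eq_iff sum_negf)

lemma invertible_mat1: "invertible (mat 1 :: real^'n^'n)"
  by (auto simp: invertible_def)

lemma invertible_neg_mat1: "invertible (- mat 1 :: real^'n^'n)"
  by (auto simp: invertible_def intro: exI[of _ "- mat 1"])

lemma neg_mat1_ne_mat1 [simp]: "(- mat 1 :: real^'n^'n) \<noteq> mat 1"
  by (simp add: vec_eq_iff mat_def)

lemma AffE_simps: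
  "carrier AffE = {g. invertible (snd g)}"
  "g \<otimes>\<^bsub>AffE\<^esub> h = (fst g + snd g *v fst h, snd g ** snd h)"
  "\<one>\<^bsub>AffE\<^esub> = (0, mat 1)"
  by (simp_all add: AffE_def)

lemma aff_app_mult: "aff_app (g \<otimes>\<^bsub>AffE\<^esub> h) x = aff_app g (aff_app h x)"
  by (simp add: AffE_simps aff_app_def matrix_vector_mul_assoc matrix_vector_right_distrib add.assoc)

lemma group_AffE: "group AffE"
proof (rule groupI)
  fix g assume "g \<in> carrier AffE"
  then obtain B where B: "B ** snd g = mat 1"
    by (auto simp: AffE_simps invertible_left_inverse)
  then have "(- (B *v fst g), B) \<in> carrier AffE"
    using invertible_left_inverse matrix_left_right_inverse by (auto simp: AffE_simps)
  moreover have "(- (B *v fst g), B) \<otimes>\<^bsub>AffE\<^esub> g = \<one>\<^bsub>AffE\<^esub>"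
    using B by (simp add: AffE_simps matrix_vector_mul_assoc)
  ultimately show "\<exists>h\<in>carrier AffE. h \<otimes>\<^bsub>AffE\<^esub> g = \<one>\<^bsub>AffE\<^esub>"
    by blast
qed (auto simp: AffE_simps invertible_mat1 invertible_mult matrix_mul_assoc matrix_vector_mul_assoc
    matrix_vector_right_distrib)

interpretation AffE: group AffE
  by (rule group_AffE)

lemma inv_AffE: "B ** A = mat 1 \<Longrightarrow> inv\<^bsub>AffE\<^esub> (a, A) = (- (B *v a), B)"
  by (rule AffE.inv_equality)
    (auto simp: AffE_simps matrix_vector_mul_assoc invertible_left_inverse matrix_left_right_inverse)

lemma conj_translation:
  "B ** A = mat 1 \<Longrightarrow> (a, A) \<otimes>\<^bsub>AffE\<^esub> (n, mat 1) \<otimes>\<^bsub>AffE\<^esub> inv\<^bsub>AffE\<^esub> (a, A) = (A *v n, mat 1)"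
  by (simp add: AffE_simps inv_AffE matrix_vector_mul_assoc matrix_left_right_inverse)

lemma conj_point_reflection:
  "B ** A = mat 1 \<Longrightarrow>
    (a, A) \<otimes>\<^bsub>AffE\<^esub> (n, - mat 1) \<otimes>\<^bsub>AffE\<^esub> inv\<^bsub>AffE\<^esub> (a, A) = (2 *\<^sub>R a + A *v n, - mat 1)"
  by (simp add: AffE_simps inv_AffE matrix_vector_mul_assoc matrix_left_right_inverse scaleR_2)

lemma int_vec_e1_e2 [simp]: "int_vec e1" "int_vec e2"
  by (simp_all add: int_vec_def e1_def e2_def forall_2)

lemma subgroup_Mgrp: "subgroup Mgrp AffE"
  unfolding Mgrp_def
  by (rule AffE.generate_is_subgroup) (auto simp: AffE_simps invertible_mat1 invertible_neg_mat1)

lemma Mgrp_translation_multiples: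
  assumes "(v, mat 1) \<in> Mgrp"
  shows "(of_int k *\<^sub>R v, mat 1) \<in> Mgrp"
proof (induction k rule: int_induct[where k = 0])
  case base
  show ?case
    using subgroup.one_closed[OF subgroup_Mgrp] by (simp add: AffE_simps)
next
  case (step1 k)
  then show ?case
    using subgroup.m_closed[OF subgroup_Mgrp step1(2) assms] by (simp add: AffE_simps algebra_simps)
next
  case (step2 k)
  have "inv\<^bsub>AffE\<^esub> (v, mat 1) = (- v, mat 1)"
    by (simp add: inv_AffE)
  then have "(- v, mat 1) \<in> Mgrp"
    using subgroup.m_inv_closed[OF subgroup_Mgrp assms] by simp
  from subgroup.m_closed[OF subgroup_Mgrp step2(2) this] show ?case
    by (simp add: AffE_simps algebra_simps)
qed

lemma Mgrp_iff: "(n, E) \<in> Mgrp \<longleftrightarrow> int_vec n \<and> (E = mat 1 \<or> E = - mat 1)"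
proof
  assume "(n, E) \<in> Mgrp"
  then have "int_vec (fst (n, E)) \<and> (snd (n, E) = mat 1 \<or> snd (n, E) = - mat 1)"
    unfolding Mgrp_def
  proof (induction rule: generate.induct)
    case (inv g)
    then show ?case
      using inv_AffE[of "mat 1" "mat 1"] inv_AffE[of "- mat 1" "- mat 1"]
      by (auto simp: int_vec_def e1_def e2_def forall_2)
  qed (auto simp: AffE_simps int_vec_def e1_def e2_def forall_2)
  then show "int_vec n \<and> (E = mat 1 \<or> E = - mat 1)"
    by simp
next
  assume n: "int_vec n \<and> (E = mat 1 \<or> E = - mat 1)"
  obtain i j where "n $ 1 = of_int i" "n $ 2 = of_int j"
    using n by (meson Ints_cases int_vec_def)
  then have "(n, mat 1) = (of_int i *\<^sub>R e1, mat 1) \<otimes>\<^bsub>AffE\<^esub> (of_int j *\<^sub>R e2, mat 1)"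
    by (simp add: AffE_simps vec_eq_iff forall_2 e1_def e2_def)
  moreover have "(e1, mat 1) \<in> Mgrp" "(e2, mat 1) \<in> Mgrp" "(0, - mat 1) \<in> Mgrp"
    by (auto simp: Mgrp_def intro: generate.incl)
  ultimately have "(n, mat 1) \<in> Mgrp" "(0, - mat 1) \<in> Mgrp"
    by (auto intro: subgroup.m_closed[OF subgroup_Mgrp] Mgrp_translation_multiples)
  then show "(n, E) \<in> Mgrp"
    using n subgroup.m_closed[OF subgroup_Mgrp] by (fastforce simp: AffE_simps)
qed

lemma orbM_aff_app:
  assumes m: "m \<in> Mgrp"
  shows "orbM (aff_app m x) = orbM x"
proof -
  interpret M: subgroup Mgrp AffE
    by (rule subgroup_Mgrp)
  show ?thesis
  proof (rule Set.set_eqI)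
    fix y
    show "y \<in> orbM (aff_app m x) \<longleftrightarrow> y \<in> orbM x"
    proof
      assume "y \<in> orbM (aff_app m x)"
      then obtain g where "g \<in> Mgrp" "y = aff_app (g \<otimes>\<^bsub>AffE\<^esub> m) x"
        by (auto simp: orbM_def aff_app_mult)
      then show "y \<in> orbM x"
        using m by (auto simp: orbM_def)
    next
      assume "y \<in> orbM x"
      then obtain g where g: "g \<in> Mgrp" "y = aff_app g x"
        by (auto simp: orbM_def)
      then have "y = aff_app (g \<otimes>\<^bsub>AffE\<^esub> inv\<^bsub>AffE\<^esub> m) (aff_app m x)"
        using m by (simp add: AffE.m_assoc M.mem_carrier flip: aff_app_mult)
      then show "y \<in> orbM (aff_app m x)"
        using g m by (auto simp: orbM_def)
    qed
  qed
qed

lemma in_orbM_iff: "y \<in> orbM x \<longleftrightarrow> int_vec (y - x) \<or> int_vec (y + x)"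
proof
  assume "y \<in> orbM x"
  then obtain n E where "(n, E) \<in> Mgrp" "y = n + E *v x"
    by (auto simp: orbM_def aff_app_def)
  then show "int_vec (y - x) \<or> int_vec (y + x)"
    by (auto simp: Mgrp_iff)
next
  have "y = aff_app (y - x, mat 1) x" "y = aff_app (y + x, - mat 1) x"
    by (simp_all add: aff_app_def)
  then show "int_vec (y - x) \<or> int_vec (y + x) \<Longrightarrow> y \<in> orbM x"
    unfolding orbM_def by (metis Mgrp_iff image_eqI)
qed

lemma orbM_self: "x \<in> orbM x"
  by (simp add: in_orbM_iff)

lemma orbM_eq: "y \<in> orbM x \<Longrightarrow> orbM y = orbM x"
  unfolding orbM_def by (metis imageE orbM_aff_app orbM_def)

section \<open>The normalizer of M\<close>

lemma (in group) normalizer_conj_closed: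
  assumes "H \<subseteq> carrier G" "g \<in> normalizer G H" "h \<in> H"
  shows "g \<otimes> h \<otimes> inv g \<in> H"
proof -
  have "g <# H #> inv g = H"
    using assms(1,2) by (simp add: normalizer_def stabilizer_def)
  moreover have "g \<otimes> h \<otimes> inv g \<in> g <# H #> inv g"
    using assms(3) by (auto simp: l_coset_def r_coset_def)
  ultimately show ?thesis
    by simp
qed

lemma (in group) normalizerI:
  assumes H: "H \<subseteq> carrier G" and g: "g \<in> carrier G"
    and conj: "\<And>h. h \<in> H \<Longrightarrow> g \<otimes> h \<otimes> inv g \<in> H"
    and conj_inv: "\<And>h. h \<in> H \<Longrightarrow> inv g \<otimes> h \<otimes> g \<in> H"
  shows "g \<in> normalizer G H"
proof -
  have "h \<in> g <# H #> inv g" if "h \<in> H" for h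
  proof -
    have "h \<in> carrier G"
      using that H by blast
    then have "h = g \<otimes> (inv g \<otimes> h \<otimes> g) \<otimes> inv g"
      using g by (simp add: m_assoc) (simp add: m_assoc [symmetric])
    then show ?thesis
      using conj_inv[OF that] by (auto simp: l_coset_def r_coset_def)
  qed
  moreover have "g <# H #> inv g \<subseteq> H"
    using conj by (auto simp: l_coset_def r_coset_def)
  ultimately show ?thesis
    using H g by (auto simp: normalizer_def stabilizer_def)
qed

lemma Mgrp_subset_carrier: "Mgrp \<subseteq> carrier AffE"
  by (rule subgroup.subset[OF subgroup_Mgrp])

lemma subgroup_NM: "subgroup NM AffE"
  unfolding NM_def by (rule AffE.normalizer_imp_subgroup[OF Mgrp_subset_carrier])

lemma NM_left_inverse:
  assumes "(a, A) \<in> NM"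
  obtains B where "B ** A = mat 1"
  using subgroup.subset[OF subgroup_NM] assms by (auto simp: AffE_simps invertible_left_inverse)

lemma NM_integral:
  assumes g: "(a, A) \<in> NM"
  shows "int_mat A \<and> int_vec (2 *\<^sub>R a)"
proof -
  obtain B where BA: "B ** A = mat 1"
    using NM_left_inverse[OF g] .
  have conj: "(a, A) \<otimes>\<^bsub>AffE\<^esub> m \<otimes>\<^bsub>AffE\<^esub> inv\<^bsub>AffE\<^esub> (a, A) \<in> Mgrp" if "m \<in> Mgrp" for m
    using AffE.normalizer_conj_closed[OF Mgrp_subset_carrier g[unfolded NM_def] that] .
  have "int_vec (A *v e1)" "int_vec (A *v e2)"
    using conj[of "(e1, mat 1)"] conj[of "(e2, mat 1)"] by (simp_all add: Mgrp_iff conj_translation[OF BA])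
  moreover have "int_vec (2 *\<^sub>R a)"
    using conj[of "(0, - mat 1)"] by (simp add: Mgrp_iff conj_point_reflection[OF BA])
  ultimately show ?thesis
    using int_mat_of_columns by blast
qed

lemma conj_Mgrp_closed:
  assumes "int_vec (2 *\<^sub>R a)" "A \<in> carrier GL2Z" "m \<in> Mgrp"
  shows "(a, A) \<otimes>\<^bsub>AffE\<^esub> m \<otimes>\<^bsub>AffE\<^esub> inv\<^bsub>AffE\<^esub> (a, A) \<in> Mgrp"
proof -
  have "invertible A"
    using assms(2) by (auto simp: GL2Z_carrier_iff invertible_det_nz)
  then obtain B where BA: "B ** A = mat 1"
    by (auto simp: invertible_left_inverse)
  obtain n E where m: "m = (n, E)" "int_vec n" "E = mat 1 \<or> E = - mat 1"
    using assms(3) by (cases m) (auto simp: Mgrp_iff)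
  have "int_mat A"
    using assms(2) by (simp add: GL2Z_carrier_iff)
  then show ?thesis
    using m assms(1)
    by (auto simp: Mgrp_iff conj_translation[OF BA] conj_point_reflection[OF BA]
        intro!: int_vec_add int_mat_mult_vec)
qed

lemma NM_iff: "(a, A) \<in> NM \<longleftrightarrow> int_vec (2 *\<^sub>R a) \<and> A \<in> carrier GL2Z"
proof
  assume g: "(a, A) \<in> NM"
  obtain B where BA: "B ** A = mat 1"
    using NM_left_inverse[OF g] .
  have "(- (B *v a), B) \<in> NM"
    using subgroup.m_inv_closed[OF subgroup_NM g] by (simp add: inv_AffE[OF BA])
  then have "int_mat B"
    using NM_integral by blast
  moreover have "int_mat A" "int_vec (2 *\<^sub>R a)"
    using NM_integral[OF g] by auto
  ultimately show "int_vec (2 *\<^sub>R a) \<and> A \<in> carrier GL2Z"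
    using BA int_mat_det_unit matrix_left_right_inverse by (auto simp: GL2Z_carrier_iff)
next
  assume a: "int_vec (2 *\<^sub>R a) \<and> A \<in> carrier GL2Z"
  then have "invertible A"
    by (auto simp: GL2Z_carrier_iff invertible_det_nz)
  then obtain B where BA: "B ** A = mat 1"
    by (auto simp: invertible_left_inverse)
  have "B \<in> carrier GL2Z"
    using a BA GL2Z_left_inverse by blast
  moreover have "int_vec (2 *\<^sub>R (- (B *v a)))"
    using a \<open>B \<in> carrier GL2Z\<close>
    by (auto simp: GL2Z_carrier_iff simp flip: matrix_vector_mult_scaleR)
  ultimately have "inv\<^bsub>AffE\<^esub> (a, A) \<otimes>\<^bsub>AffE\<^esub> m \<otimes>\<^bsub>AffE\<^esub> inv\<^bsub>AffE\<^esub> (inv\<^bsub>AffE\<^esub> (a, A)) \<in> Mgrp"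
    if "m \<in> Mgrp" for m
    using conj_Mgrp_closed that by (simp add: inv_AffE[OF BA])
  moreover have "(a, A) \<in> carrier AffE"
    using \<open>invertible A\<close> by (simp add: AffE_simps)
  ultimately show "(a, A) \<in> NM"
    unfolding NM_def using a conj_Mgrp_closed
    by (intro AffE.normalizerI Mgrp_subset_carrier) auto
qed

lemma NM_subset_carrier: "NM \<subseteq> carrier AffE"
  by (rule subgroup.subset[OF subgroup_NM])

section \<open>The affinity group Aff(M)\<close>

lemma star_orbM:
  assumes g: "g \<in> NM"
  shows "star g (orbM x) = orbM (aff_app g x)"
proof -
  define y where "y = (SOME y. y \<in> orbM x)"
  have "y \<in> orbM x"
    unfolding y_def using orbM_self by (rule someI)
  then obtain m where m: "m \<in> Mgrp" "y = aff_app m x"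
    by (auto simp: orbM_def)
  have carrier: "g \<in> carrier AffE" "m \<in> carrier AffE"
    using g m NM_subset_carrier Mgrp_subset_carrier by auto
  have "aff_app g y = aff_app (g \<otimes>\<^bsub>AffE\<^esub> m \<otimes>\<^bsub>AffE\<^esub> inv\<^bsub>AffE\<^esub> g) (aff_app g x)"
    using m carrier by (simp add: AffE.m_assoc flip: aff_app_mult)
  moreover have "g \<otimes>\<^bsub>AffE\<^esub> m \<otimes>\<^bsub>AffE\<^esub> inv\<^bsub>AffE\<^esub> g \<in> Mgrp"
    using AffE.normalizer_conj_closed[OF Mgrp_subset_carrier g[unfolded NM_def] m(1)] .
  ultimately have "orbM (aff_app g y) = orbM (aff_app g x)"
    by (simp add: orbM_aff_app)
  then show ?thesis
    by (simp add: star_def OrbSp_def y_def)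
qed

lemma star_extensional [simp]: "star g \<in> extensional OrbSp"
  by (simp add: star_def)

lemma star_eqI:
  assumes "f \<in> extensional OrbSp" "\<And>x. star g (orbM x) = f (orbM x)"
  shows "star g = f"
  using assms by (intro extensionalityI[OF star_extensional]) (auto simp: OrbSp_def)

lemma AffM_simps:
  "carrier AffM = star ` NM"
  "f \<otimes>\<^bsub>AffM\<^esub> h = (\<lambda>P\<in>OrbSp. f (h P))"
  "\<one>\<^bsub>AffM\<^esub> = (\<lambda>P\<in>OrbSp. P)"
  by (simp_all add: AffM_def)

lemma star_mult:
  assumes "g \<in> NM" "h \<in> NM"
  shows "star (g \<otimes>\<^bsub>AffE\<^esub> h) = star g \<otimes>\<^bsub>AffM\<^esub> star h"
  using assms subgroup.m_closed[OF subgroup_NM assms]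
  by (intro star_eqI) (simp_all add: AffM_simps star_orbM aff_app_mult OrbSp_def)

lemma star_one: "star \<one>\<^bsub>AffE\<^esub> = \<one>\<^bsub>AffM\<^esub>"
  using subgroup.one_closed[OF subgroup_NM]
  by (intro star_eqI) (simp_all add: AffM_simps star_orbM OrbSp_def AffE_simps aff_app_def)

lemma star_hom: "star \<in> hom (AffE\<lparr>carrier := NM\<rparr>) AffM"
  by (rule homI) (simp_all add: AffM_simps star_mult)

lemma group_AffM: "group AffM"
proof -
  have "group (AffM\<lparr>carrier := star ` carrier (AffE\<lparr>carrier := NM\<rparr>),
      one := star \<one>\<^bsub>AffE\<lparr>carrier := NM\<rparr>\<^esub>\<rparr>)"
    by (rule group.hom_imp_img_group[OF AffE.subgroup_imp_group[OF subgroup_NM] star_hom])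
  then show ?thesis
    using star_one by (simp add: AffM_def)
qed

lemma star_group_hom: "group_hom (AffE\<lparr>carrier := NM\<rparr>) AffM star"
  by (intro group_hom.intro group_hom_axioms.intro AffE.subgroup_imp_group subgroup_NM
      group_AffM star_hom)

lemma star_inv: "g \<in> NM \<Longrightarrow> inv\<^bsub>AffM\<^esub> (star g) = star (inv\<^bsub>AffE\<^esub> g)"
  using group_hom.hom_inv[OF star_group_hom] AffE.m_inv_consistent[OF subgroup_NM] by simp

lemma star_eq_iff:
  assumes g: "(a, A) \<in> NM" and h: "(b, B) \<in> NM"
  shows "star (a, A) = star (b, B) \<longleftrightarrow> (B = A \<and> int_vec (b - a)) \<or> (B = - A \<and> int_vec (b + a))"
proof
  assume eq: "star (a, A) = star (b, B)"
  have "int_vec ((B - A) *v x + (b - a)) \<or> int_vec ((B + A) *v x + (b + a))" for x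
  proof -
    have "orbM (aff_app (b, B) x) = orbM (aff_app (a, A) x)"
      using eq star_orbM[OF g] star_orbM[OF h] by metis
    then have "aff_app (b, B) x \<in> orbM (aff_app (a, A) x)"
      using orbM_self by metis
    then show ?thesis
      by (simp add: in_orbM_iff aff_app_def algebra_simps)
  qed
  then have "(B - A = 0 \<and> int_vec (b - a)) \<or> (B + A = 0 \<and> int_vec (b + a))"
    by (intro int_vec_affine_cover) blast
  then show "(B = A \<and> int_vec (b - a)) \<or> (B = - A \<and> int_vec (b + a))"
    by (auto simp: add_eq_0_iff)
next
  assume "(B = A \<and> int_vec (b - a)) \<or> (B = - A \<and> int_vec (b + a))"
  then have "aff_app (b, B) x \<in> orbM (aff_app (a, A) x)" for x
    by (auto simp: in_orbM_iff aff_app_def algebra_simps)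
  then have "orbM (aff_app (b, B) x) = orbM (aff_app (a, A) x)" for x
    by (rule orbM_eq)
  then show "star (a, A) = star (b, B)"
    by (intro star_eqI) (simp_all add: star_orbM[OF g] star_orbM[OF h])
qed

section \<open>The Klein four-group K\<close>

lemma translation_NM_iff: "(v, mat 1) \<in> NM \<longleftrightarrow> int_vec (2 *\<^sub>R v)"
  by (simp add: NM_iff GL2Z_carrier_iff)

lemma star_translation_eq_iff:
  assumes "int_vec (2 *\<^sub>R v)" "int_vec (2 *\<^sub>R w)"
  shows "star (v, mat 1) = star (w, mat 1) \<longleftrightarrow> int_vec (w - v)"
  using assms star_eq_iff[of v "mat 1" w "mat 1"] neg_mat1_ne_mat1 by (metis translation_NM_iff)

definition half_vec :: "int \<Rightarrow> int \<Rightarrow> real^2" where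
  "half_vec i j = vector [of_int i / 2, of_int j / 2]"

definition half_shift :: "int \<Rightarrow> int \<Rightarrow> (real^2) set \<Rightarrow> (real^2) set" where
  "half_shift i j = star (half_vec i j, mat 1)"

lemma int_vec_double_iff: "int_vec (2 *\<^sub>R v) \<longleftrightarrow> (\<exists>i j. v = half_vec i j)"
proof
  assume "int_vec (2 *\<^sub>R v)"
  then obtain i j where "2 * v $ 1 = of_int i" "2 * v $ 2 = of_int j"
    by (auto simp: int_vec_def forall_2 elim!: Ints_cases)
  then have "v = half_vec i j"
    by (simp add: half_vec_def vec_eq_iff forall_2)
  then show "\<exists>i j. v = half_vec i j"
    by blast
qed (auto simp: half_vec_def int_vec_def forall_2)

lemma half_vec_0: "half_vec 0 0 = 0"
  by (simp add: half_vec_def vec_eq_iff forall_2)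

lemma half_vec_NM: "(half_vec i j, mat 1) \<in> NM"
  using int_vec_double_iff translation_NM_iff by blast

lemma half_int_iff_even: "(of_int k / 2 :: real) \<in> \<int> \<longleftrightarrow> even k"
proof
  assume "of_int k / 2 \<in> (\<int> :: real set)"
  then obtain m where "of_int k / 2 = (of_int m :: real)"
    by (auto elim!: Ints_cases)
  then have "k = 2 * m"
    by linarith
  then show "even k"
    by simp
qed auto

lemma int_vec_half_vec_iff: "int_vec (half_vec i j) \<longleftrightarrow> even i \<and> even j"
  by (simp add: int_vec_def forall_2 half_vec_def half_int_iff_even)

lemma half_shift_eq_iff: "half_shift i j = half_shift i' j' \<longleftrightarrow> even (i' - i) \<and> even (j' - j)"
proof -
  have "half_vec i' j' - half_vec i j = half_vec (i' - i) (j' - j)"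
    by (simp add: half_vec_def vec_eq_iff forall_2 diff_divide_distrib)
  then show ?thesis
    unfolding half_shift_def using half_vec_NM
    by (simp add: star_translation_eq_iff translation_NM_iff int_vec_half_vec_iff)
qed

lemma half_shift_mod: "half_shift i j = half_shift (i mod 2) (j mod 2)"
  by (simp add: half_shift_eq_iff even_iff_mod_2_eq_zero mod_diff_eq[symmetric])

lemma half_shift_mult: "half_shift i j \<otimes>\<^bsub>AffM\<^esub> half_shift i' j' = half_shift (i + i') (j + j')"
proof -
  have "half_vec i j + half_vec i' j' = half_vec (i + i') (j + j')"
    by (simp add: half_vec_def vec_eq_iff forall_2 add_divide_distrib)
  then show ?thesis
    unfolding half_shift_def by (simp add: half_vec_NM flip: star_mult) (simp add: AffE_simps)
qed

lemma half_shift_carrier: "half_shift i j \<in> carrier AffM"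
  using half_vec_NM by (simp add: half_shift_def AffM_simps)

lemma Kgrp_generators:
  "{star ((1/2) *\<^sub>R e1, mat 1), star ((1/2) *\<^sub>R e2, mat 1)} = {half_shift 1 0, half_shift 0 1}"
proof -
  have "(1/2) *\<^sub>R e1 = half_vec 1 0" "(1/2) *\<^sub>R e2 = half_vec 0 1"
    by (simp_all add: half_vec_def e1_def e2_def vec_eq_iff forall_2)
  then show ?thesis
    by (simp add: half_shift_def)
qed

lemma subgroup_Kgrp: "subgroup Kgrp AffM"
  unfolding Kgrp_def Kgrp_generators
  by (rule group.generate_is_subgroup[OF group_AffM]) (simp add: half_shift_carrier)

lemma half_shift_in_Kgrp: "half_shift i j \<in> Kgrp"
proof -
  have gens: "half_shift 1 0 \<in> Kgrp" "half_shift 0 1 \<in> Kgrp"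
    unfolding Kgrp_def Kgrp_generators by (auto intro: generate.incl)
  have "half_shift 0 0 = \<one>\<^bsub>AffM\<^esub>"
    using star_one by (simp add: half_shift_def half_vec_0 AffE_simps)
  then have "half_shift 0 0 \<in> Kgrp"
    using subgroup.one_closed[OF subgroup_Kgrp] by simp
  moreover have "half_shift 1 1 \<in> Kgrp"
    using subgroup.m_closed[OF subgroup_Kgrp gens] by (simp add: half_shift_mult)
  moreover have "i mod 2 \<in> {0, 1}" "j mod 2 \<in> {0, 1}"
    by auto
  ultimately have "half_shift (i mod 2) (j mod 2) \<in> Kgrp"
    using gens by auto
  then show ?thesis
    by (subst half_shift_mod)
qed

lemma Kgrp_eq: "Kgrp = {star (v, mat 1) | v. int_vec (2 *\<^sub>R v)}"
proof
  show "Kgrp \<subseteq> {star (v, mat 1) | v. int_vec (2 *\<^sub>R v)}"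
  proof
    fix f assume "f \<in> Kgrp"
    then show "f \<in> {star (v, mat 1) | v. int_vec (2 *\<^sub>R v)}"
      unfolding Kgrp_def Kgrp_generators
    proof (induction rule: generate.induct)
      case one
      show ?case
        using star_one[symmetric] by (auto simp: AffE_simps intro!: exI[of _ 0])
    next
      case (incl h)
      then show ?case
        using half_vec_NM by (auto simp: half_shift_def translation_NM_iff)
    next
      case (inv h)
      then obtain v where "int_vec (2 *\<^sub>R v)" "h = star (v, mat 1)"
        using half_vec_NM by (auto simp: half_shift_def translation_NM_iff)
      then show ?case
        by (auto simp: star_inv translation_NM_iff inv_AffE[of "mat 1" "mat 1"]
            intro!: exI[of _ "- v"])
    next
      case (eng h1 h2)
      then obtain v w where "int_vec (2 *\<^sub>R v)" "h1 = star (v, mat 1)"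
        "int_vec (2 *\<^sub>R w)" "h2 = star (w, mat 1)"
        by blast
      then show ?case
        by (auto simp: translation_NM_iff AffE_simps scaleR_right_distrib
            simp flip: star_mult intro!: exI[of _ "v + w"])
    qed
  qed
  show "{star (v, mat 1) | v. int_vec (2 *\<^sub>R v)} \<subseteq> Kgrp"
    using half_shift_in_Kgrp by (auto simp: int_vec_double_iff half_shift_def)
qed

lemma Kgrp_eq_half_shifts: "Kgrp = (\<lambda>(i, j). half_shift i j) ` ({0, 1} \<times> {0, 1})"
proof
  show "Kgrp \<subseteq> (\<lambda>(i, j). half_shift i j) ` ({0, 1} \<times> {0, 1})"
  proof
    fix f assume "f \<in> Kgrp"
    then obtain i j where "f = half_shift (i mod 2) (j mod 2)"
      using half_shift_mod by (auto simp: Kgrp_eq int_vec_double_iff half_shift_def)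
    moreover have "i mod 2 \<in> {0, 1}" "j mod 2 \<in> {0, 1}"
      by auto
    ultimately show "f \<in> (\<lambda>(i, j). half_shift i j) ` ({0, 1} \<times> {0, 1})"
      by force
  qed
qed (auto simp: half_shift_in_Kgrp)

lemma inj_on_half_shift: "inj_on (\<lambda>(i, j). half_shift i j) ({0, 1} \<times> {0, 1})"
  by (auto simp: inj_on_def half_shift_eq_iff)

lemma card_Kgrp: "card Kgrp = 4"
  unfolding Kgrp_eq_half_shifts card_image[OF inj_on_half_shift] by simp

lemma Kgrp_iso_Klein: "AffM\<lparr>carrier := Kgrp\<rparr> \<cong> integer_mod_group 2 \<times>\<times> integer_mod_group 2"
proof -
  let ?V = "integer_mod_group 2 \<times>\<times> integer_mod_group 2"
  have carrier_V: "carrier ?V = {0, 1} \<times> {0, 1}"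
    by (auto simp: carrier_integer_mod_group)
  have "(\<lambda>(i, j). half_shift i j) \<in> hom ?V (AffM\<lparr>carrier := Kgrp\<rparr>)"
    by (rule homI)
      (auto simp: carrier_V half_shift_in_Kgrp half_shift_mult DirProd_def
        simp flip: half_shift_mod)
  moreover have "bij_betw (\<lambda>(i, j). half_shift i j) (carrier ?V) Kgrp"
    unfolding carrier_V Kgrp_eq_half_shifts by (rule inj_on_imp_bij_betw[OF inj_on_half_shift])
  ultimately have "?V \<cong> AffM\<lparr>carrier := Kgrp\<rparr>"
    unfolding is_iso_def iso_def by auto
  then show ?thesis
    by (rule group.iso_sym[OF DirProd_group[OF group_integer_mod_group group_integer_mod_group]])
qed

lemma Kgrp_normal: "Kgrp \<lhd> AffM"
proof -
  have "star g \<otimes>\<^bsub>AffM\<^esub> star (v, mat 1) \<otimes>\<^bsub>AffM\<^esub> inv\<^bsub>AffM\<^esub> star g \<in> Kgrp"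
    if g: "g \<in> NM" and v: "int_vec (2 *\<^sub>R v)" for g v
  proof -
    obtain a A where gA: "g = (a, A)"
      by fastforce
    obtain B where BA: "B ** A = mat 1"
      using NM_left_inverse g gA by blast
    have "(v, mat 1) \<in> NM" "inv\<^bsub>AffE\<^esub> g \<in> NM"
      using v g subgroup.m_inv_closed[OF subgroup_NM] by (auto simp: translation_NM_iff)
    then have "star g \<otimes>\<^bsub>AffM\<^esub> star (v, mat 1) \<otimes>\<^bsub>AffM\<^esub> inv\<^bsub>AffM\<^esub> star g = star (A *v v, mat 1)"
      using g subgroup.m_closed[OF subgroup_NM]
      by (simp add: star_inv gA conj_translation[OF BA] flip: star_mult)
    moreover have "int_vec (2 *\<^sub>R (A *v v))"
      using v NM_integral g gA by (auto simp flip: matrix_vector_mult_scaleR)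
    ultimately show ?thesis
      by (auto simp: Kgrp_eq)
  qed
  then show ?thesis
    using subgroup_Kgrp group.normal_inv_iff[OF group_AffM]
    by (auto simp: AffM_simps Kgrp_eq)
qed

section \<open>The epimorphism onto PGL(2,\<int>)\<close>

lemma GL2Z_mult [simp]: "A \<otimes>\<^bsub>GL2Z\<^esub> B = A ** B"
  by (simp add: GL2Z_def)

lemma pm_eq: "pm A = {A, - A}"
  by (auto simp: pm_def r_coset_def)

lemma pm_eq_iff: "pm A = pm B \<longleftrightarrow> B = A \<or> B = - A"
  by (auto simp: pm_eq doubleton_eq_iff)

lemma PGL2Z_carrier: "carrier PGL2Z = pm ` carrier GL2Z"
  by (auto simp: PGL2Z_def FactGroup_def RCOSETS_def pm_def)

lemma PGL2Z_one: "\<one>\<^bsub>PGL2Z\<^esub> = pm (mat 1)"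
  by (simp add: PGL2Z_def FactGroup_def pm_eq)

lemma pm_mult: "pm A \<otimes>\<^bsub>PGL2Z\<^esub> pm B = pm (A ** B)"
  by (auto simp: PGL2Z_def FactGroup_def pm_eq set_mult_def)

definition linear_class :: "((real^2) set \<Rightarrow> (real^2) set) \<Rightarrow> (real^2^2) set" where
  "linear_class f = pm (snd (SOME g. g \<in> NM \<and> star g = f))"

definition linear_section :: "(real^2^2) set \<Rightarrow> (real^2) set \<Rightarrow> (real^2) set" where
  "linear_section P = star (0, SOME A. A \<in> carrier GL2Z \<and> pm A = P)"

lemma linear_class_star: "g \<in> NM \<Longrightarrow> linear_class (star g) = pm (snd g)"
proof -
  assume g: "g \<in> NM"
  define h where "h = (SOME h. h \<in> NM \<and> star h = star g)"
  have "\<exists>h. h \<in> NM \<and> star h = star g"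
    using g by blast
  then have "h \<in> NM \<and> star h = star g"
    unfolding h_def by (rule someI_ex)
  then have "pm (snd h) = pm (snd g)"
    using g star_eq_iff[of "fst h" "snd h" "fst g" "snd g"] by (auto simp: pm_eq_iff)
  then show ?thesis
    by (simp add: linear_class_def h_def)
qed

lemma linear_section_pm: "A \<in> carrier GL2Z \<Longrightarrow> linear_section (pm A) = star (0, A)"
proof -
  assume A: "A \<in> carrier GL2Z"
  define B where "B = (SOME B. B \<in> carrier GL2Z \<and> pm B = pm A)"
  have "\<exists>B. B \<in> carrier GL2Z \<and> pm B = pm A"
    using A by blast
  then have "B \<in> carrier GL2Z \<and> pm B = pm A"
    unfolding B_def by (rule someI_ex)
  then have "star (0, B) = star (0, A)"
    using A star_eq_iff[of 0 B 0 A] by (auto simp: NM_iff pm_eq_iff)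
  then show ?thesis
    by (simp add: linear_section_def B_def)
qed

lemma linear_class_hom: "linear_class \<in> hom AffM PGL2Z"
proof (rule homI)
  fix f assume "f \<in> carrier AffM"
  then show "linear_class f \<in> carrier PGL2Z"
    by (auto simp: AffM_simps linear_class_star PGL2Z_carrier NM_iff)
next
  fix f f' assume "f \<in> carrier AffM" "f' \<in> carrier AffM"
  then obtain g g' where "g \<in> NM" "g' \<in> NM" "f = star g" "f' = star g'"
    by (auto simp: AffM_simps)
  then show "linear_class (f \<otimes>\<^bsub>AffM\<^esub> f') = linear_class f \<otimes>\<^bsub>PGL2Z\<^esub> linear_class f'"
    using subgroup.m_closed[OF subgroup_NM]
    by (simp add: linear_class_star pm_mult AffE_simps flip: star_mult)
qed

lemma linear_class_epi: "linear_class \<in> epi AffM PGL2Z"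
proof -
  have "pm A \<in> linear_class ` carrier AffM" if "A \<in> carrier GL2Z" for A
  proof (rule rev_image_eqI)
    show "star (0, A) \<in> carrier AffM"
      using that by (simp add: AffM_simps NM_iff)
    show "pm A = linear_class (star (0, A))"
      using that by (simp add: linear_class_star NM_iff)
  qed
  then have "linear_class ` carrier AffM = carrier PGL2Z"
    using hom_carrier[OF linear_class_hom] by (auto simp: PGL2Z_carrier)
  then show ?thesis
    using linear_class_hom by (simp add: epi_def)
qed

lemma linear_class_kernel: "kernel AffM PGL2Z linear_class = Kgrp"
proof
  show "kernel AffM PGL2Z linear_class \<subseteq> Kgrp"
  proof
    fix f assume "f \<in> kernel AffM PGL2Z linear_class"
    then obtain a A where g: "(a, A) \<in> NM" "f = star (a, A)" "pm A = pm (mat 1)"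
      by (auto simp: kernel_def AffM_simps PGL2Z_one linear_class_star)
    then have a: "int_vec (2 *\<^sub>R a)" and "A = mat 1 \<or> A = - mat 1"
      by (auto simp: NM_iff pm_eq_iff)
    then have "f = star (a, mat 1)"
      using g star_eq_iff[of a A a "mat 1"] by (auto simp: translation_NM_iff scaleR_2)
    then show "f \<in> Kgrp"
      using a by (auto simp: Kgrp_eq)
  qed
  show "Kgrp \<subseteq> kernel AffM PGL2Z linear_class"
    by (auto simp: Kgrp_eq kernel_def AffM_simps PGL2Z_one linear_class_star translation_NM_iff)
qed

lemma linear_section_hom: "linear_section \<in> hom PGL2Z AffM"
proof (rule homI)
  fix P assume "P \<in> carrier PGL2Z"
  then show "linear_section P \<in> carrier AffM"
    by (auto simp: PGL2Z_carrier AffM_simps NM_iff linear_section_pm)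
next
  fix P Q assume "P \<in> carrier PGL2Z" "Q \<in> carrier PGL2Z"
  then obtain A B where "A \<in> carrier GL2Z" "B \<in> carrier GL2Z" "P = pm A" "Q = pm B"
    by (auto simp: PGL2Z_carrier)
  moreover have "A ** B \<in> carrier GL2Z"
    using calculation by (auto simp: GL2Z_carrier_iff det_mul)
  ultimately show "linear_section (P \<otimes>\<^bsub>PGL2Z\<^esub> Q) = linear_section P \<otimes>\<^bsub>AffM\<^esub> linear_section Q"
    by (simp add: linear_section_pm pm_mult NM_iff AffE_simps flip: star_mult)
qed

lemma linear_class_linear_section: "P \<in> carrier PGL2Z \<Longrightarrow> linear_class (linear_section P) = P"
  by (auto simp: PGL2Z_carrier linear_section_pm linear_class_star NM_iff)

lemma linear_section_mon: "linear_section \<in> mon PGL2Z AffM"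
  using linear_section_hom linear_class_linear_section
    inj_on_inverseI[of "carrier PGL2Z" linear_class linear_section]
  by (simp add: mon_def)

theorem lemma21:
  shows "group AffM
    \<and> Kgrp \<lhd> AffM
    \<and> card Kgrp = 4
    \<and> AffM\<lparr>carrier := Kgrp\<rparr> \<cong> integer_mod_group 2 \<times>\<times> integer_mod_group 2
    \<and> (\<exists>\<eta>. (\<forall>g\<in>NM. \<eta> (star g) = pm (snd g))
          \<and> \<eta> \<in> epi AffM PGL2Z
          \<and> kernel AffM PGL2Z \<eta> = Kgrp
          \<and> (\<exists>\<sigma>. (\<forall>A\<in>carrier GL2Z. \<sigma> (pm A) = star (0, A))
                \<and> \<sigma> \<in> mon PGL2Z AffM
                \<and> (\<forall>x\<in>carrier PGL2Z. \<eta> (\<sigma> x) = x)))"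
proof -
  have "\<forall>g\<in>NM. linear_class (star g) = pm (snd g)"
    "\<forall>A\<in>carrier GL2Z. linear_section (pm A) = star (0, A)"
    "\<forall>x\<in>carrier PGL2Z. linear_class (linear_section x) = x"
    by (simp_all add: linear_class_star linear_section_pm linear_class_linear_section)
  then show ?thesis
    using group_AffM Kgrp_normal card_Kgrp Kgrp_iso_Klein linear_class_epi linear_class_kernel
      linear_section_mon
    by blast
qed

end
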